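(* Let $(t_i)_{i\in\mathbb{N}}$ be a sequence of real numbers that are algebraically independent over $\mathbb{Q}$, and for distinct $i,j\in\mathbb{N}$ set $P_{i,j} = (t_i + t_j,\ t_i^2 + t_it_j + t_j^2)\in\mathbb{R}^2$ (so $P_{i,j}=P_{j,i}$). Let $i,j,k,\ell,m,n$ be pairwise distinct indices. Then: (a) $P_{i,j}$, $P_{j,k}$, $P_{i,k}$ are collinear; (b) $P_{i,j}$, $P_{i,k}$, $P_{i,\ell}$ are not collinear; (c) $P_{i,j}$, $P_{j,k}$, $P_{k,\ell}$ are not collinear; (d) $P_{i,j}$, $P_{i,k}$, $P_{\ell,m}$ are not collinear; (e) $P_{i,j}$, $P_{k,\ell}$, $P_{m,n}$ are not collinear. *)

theory Defs
  imports "HOL-Analysis.Analysis"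
begin

text \<open>A polynomial is given by a finitely supported coefficient function
  on monomials; a monomial is a finitely supported exponent function.\<close>
definition alg_indep_rat :: "(nat \<Rightarrow> real) \<Rightarrow> bool" where
  "alg_indep_rat t \<longleftrightarrow>
     (\<forall>c :: (nat \<Rightarrow> nat) \<Rightarrow> rat.
        finite {\<alpha>. c \<alpha> \<noteq> 0} \<longrightarrow>
        (\<forall>\<alpha>. c \<alpha> \<noteq> 0 \<longrightarrow> finite {i. \<alpha> i \<noteq> 0}) \<longrightarrow>
        (\<Sum>\<alpha>\<in>{\<alpha>. c \<alpha> \<noteq> 0}. of_rat (c \<alpha>) * (\<Prod>i\<in>{i. \<alpha> i \<noteq> 0}. t i ^ \<alpha> i)) = 0 \<longrightarrow>
        (\<forall>\<alpha>. c \<alpha> = 0))"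

definition Ppt :: "(nat \<Rightarrow> real) \<Rightarrow> nat \<Rightarrow> nat \<Rightarrow> real \<times> real" where
  "Ppt t i j = (t i + t j, (t i)^2 + t i * t j + (t j)^2)"

end

theory Submission
  imports Defs
begin

text \<open>The points \<open>P\<^sub>a\<^sub>b\<close> have polynomial coordinates with rational coefficients in the
  \<open>t\<^sub>i\<close>, so the determinant deciding collinearity of three of them is such a polynomial too.
  A rational polynomial vanishing at an algebraically independent point vanishes everywhere,
  so a triple is non-collinear as soon as it is non-collinear for one specialisation of the
  \<open>t\<^sub>i\<close>; small integer values serve as witnesses. Collinearity in (a) is an identity: the three
  points lie on the line of slope \<open>t\<^sub>i + t\<^sub>j + t\<^sub>k\<close> through \<open>P\<^sub>i\<^sub>j\<close>.\<close>

inductive rat_polyfun :: "((nat \<Rightarrow> real) \<Rightarrow> real) \<Rightarrow> bool" where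
  var: "rat_polyfun (\<lambda>s. s i)"
| const: "rat_polyfun (\<lambda>s. of_rat q)"
| add: "rat_polyfun f \<Longrightarrow> rat_polyfun g \<Longrightarrow> rat_polyfun (\<lambda>s. f s + g s)"
| mult: "rat_polyfun f \<Longrightarrow> rat_polyfun g \<Longrightarrow> rat_polyfun (\<lambda>s. f s * g s)"

lemma rat_polyfun_diff:
  assumes "rat_polyfun f" "rat_polyfun g"
  shows "rat_polyfun (\<lambda>s. f s - g s)"
proof -
  have "rat_polyfun (\<lambda>s. f s + of_rat (- 1) * g s)"
    using assms by (intro rat_polyfun.intros)
  then show ?thesis by (simp add: of_rat_minus)
qed

lemma rat_polyfun_power:
  assumes "rat_polyfun f"
  shows "rat_polyfun (\<lambda>s. f s ^ n)"
proof (induction n)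
  case 0
  show ?case using rat_polyfun.const[of 1] by simp
next
  case (Suc n)
  show ?case using rat_polyfun.mult[OF assms Suc] by simp
qed

text \<open>A sparse normal form: a list of (coefficient, monomial) pairs, where a monomial is the
  multiset of its variables; a monomial may occur several times in the list.\<close>

type_synonym sparse_poly = "(rat \<times> nat multiset) list"

definition sparse_eval :: "(nat \<Rightarrow> real) \<Rightarrow> sparse_poly \<Rightarrow> real" where
  "sparse_eval s p = (\<Sum>(q, M)\<leftarrow>p. of_rat q * (\<Prod>i\<in>#M. s i))"

definition sparse_mult :: "sparse_poly \<Rightarrow> sparse_poly \<Rightarrow> sparse_poly" where
  "sparse_mult p p' = concat (map (\<lambda>(q, M). map (\<lambda>(q', M'). (q * q', M + M')) p') p)"

definition sparse_coeff :: "sparse_poly \<Rightarrow> (nat \<Rightarrow> nat) \<Rightarrow> rat" where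
  "sparse_coeff p \<alpha> = (\<Sum>(q, M)\<leftarrow>p. if count M = \<alpha> then q else 0)"

lemma sparse_eval_Nil [simp]: "sparse_eval s [] = 0"
  by (simp add: sparse_eval_def)

lemma sparse_eval_Cons [simp]:
  "sparse_eval s ((q, M) # p) = of_rat q * (\<Prod>i\<in>#M. s i) + sparse_eval s p"
  by (simp add: sparse_eval_def)

lemma sparse_eval_append [simp]: "sparse_eval s (p @ p') = sparse_eval s p + sparse_eval s p'"
  by (simp add: sparse_eval_def)

lemma sparse_eval_mult: "sparse_eval s (sparse_mult p p') = sparse_eval s p * sparse_eval s p'"
proof (induction p)
  case Nil
  then show ?case by (simp add: sparse_mult_def)
next
  case (Cons a p)
  obtain q M where a: "a = (q, M)" by force
  have "sparse_eval s (map (\<lambda>(q', M'). (q * q', M + M')) p')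
      = of_rat q * (\<Prod>i\<in>#M. s i) * sparse_eval s p'"
    by (induction p') (auto simp: of_rat_mult algebra_simps)
  then show ?case using Cons by (simp add: sparse_mult_def a distrib_right)
qed

lemma rat_polyfun_sparse:
  assumes "rat_polyfun f"
  obtains p where "\<And>s. f s = sparse_eval s p"
proof -
  from assms have "\<exists>p. \<forall>s. f s = sparse_eval s p"
  proof induction
    case (var i)
    show ?case by (intro exI[of _ "[(1, {#i#})]"]) simp
  next
    case (const q)
    show ?case by (intro exI[of _ "[(q, {#})]"]) simp
  next
    case (add f g)
    then obtain p p' where "\<forall>s. f s = sparse_eval s p" "\<forall>s. g s = sparse_eval s p'" by blast
    then show ?case by (intro exI[of _ "p @ p'"]) simp
  next
    case (mult f g)
    then obtain p p' where "\<forall>s. f s = sparse_eval s p" "\<forall>s. g s = sparse_eval s p'" by blast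
    then show ?case by (intro exI[of _ "sparse_mult p p'"]) (simp add: sparse_eval_mult)
  qed
  then show thesis using that by blast
qed

lemma prod_set_mset_power_count: "(\<Prod>i\<in>set_mset M. s i ^ count M i) = (\<Prod>i\<in>#M. s i)"
  by (simp add: image_prod_mset_multiplicity)

lemma sparse_coeff_eq_0: "\<alpha> \<notin> (\<lambda>(q, M). count M) ` set p \<Longrightarrow> sparse_coeff p \<alpha> = 0"
  by (induction p) (auto simp: sparse_coeff_def)

lemma sparse_eval_eq_coeff_sum:
  assumes "finite S" "(\<lambda>(q, M). count M) ` set p \<subseteq> S"
  shows "(\<Sum>\<alpha>\<in>S. of_rat (sparse_coeff p \<alpha>) * (\<Prod>i\<in>{i. \<alpha> i \<noteq> 0}. s i ^ \<alpha> i))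
    = sparse_eval s p"
  using assms(2)
proof (induction p)
  case Nil
  then show ?case by (simp add: sparse_coeff_def)
next
  case (Cons a p)
  obtain q M where a: "a = (q, M)" by force
  let ?X = "\<lambda>\<alpha>. (\<Prod>i\<in>{i. \<alpha> i \<noteq> 0}. s i ^ \<alpha> i)"
  have "(\<Sum>\<alpha>\<in>S. of_rat (sparse_coeff (a # p) \<alpha>) * ?X \<alpha>)
      = (\<Sum>\<alpha>\<in>S. if count M = \<alpha> then of_rat q * ?X \<alpha> else 0)
        + (\<Sum>\<alpha>\<in>S. of_rat (sparse_coeff p \<alpha>) * ?X \<alpha>)"
    by (auto simp: a sparse_coeff_def sum.distrib[symmetric] of_rat_add distrib_right
        intro!: sum.cong)
  also have "(\<Sum>\<alpha>\<in>S. if count M = \<alpha> then of_rat q * ?X \<alpha> else 0) = of_rat q * (\<Prod>i\<in>#M. s i)"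
    using Cons.prems assms(1) by (auto simp: a prod_set_mset_power_count)
  finally show ?case using Cons by (simp add: a)
qed

lemma alg_indep_rat_sparse_coeff_eq_0:
  assumes "alg_indep_rat t" "sparse_eval t p = 0"
  shows "sparse_coeff p \<alpha> = 0"
proof -
  define S where "S = (\<lambda>(q, M). count M) ` set p"
  have "finite S" by (simp add: S_def)
  have supp: "{\<alpha>. sparse_coeff p \<alpha> \<noteq> 0} \<subseteq> S"
    using sparse_coeff_eq_0 by (auto simp: S_def)
  have "(\<Sum>\<alpha>\<in>{\<alpha>. sparse_coeff p \<alpha> \<noteq> 0}.
      of_rat (sparse_coeff p \<alpha>) * (\<Prod>i\<in>{i. \<alpha> i \<noteq> 0}. t i ^ \<alpha> i))
    = (\<Sum>\<alpha>\<in>S. of_rat (sparse_coeff p \<alpha>) * (\<Prod>i\<in>{i. \<alpha> i \<noteq> 0}. t i ^ \<alpha> i))"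
    by (rule sum.mono_neutral_left[OF \<open>finite S\<close> supp]) auto
  also have "\<dots> = sparse_eval t p"
    by (rule sparse_eval_eq_coeff_sum[OF \<open>finite S\<close>]) (simp add: S_def)
  finally have "(\<Sum>\<alpha>\<in>{\<alpha>. sparse_coeff p \<alpha> \<noteq> 0}.
      of_rat (sparse_coeff p \<alpha>) * (\<Prod>i\<in>{i. \<alpha> i \<noteq> 0}. t i ^ \<alpha> i)) = 0"
    using assms(2) by simp
  moreover have "finite {i. \<alpha> i \<noteq> 0}" if "sparse_coeff p \<alpha> \<noteq> 0" for \<alpha>
    using that supp by (auto simp: S_def)
  ultimately show ?thesis
    using assms(1) finite_subset[OF supp \<open>finite S\<close>] unfolding alg_indep_rat_def by blast
qed

lemma alg_indep_rat_polyfun_eq_0: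
  assumes "alg_indep_rat t" "rat_polyfun f" "f t = 0"
  shows "f s = 0"
proof -
  obtain p where p: "\<And>s. f s = sparse_eval s p"
    using rat_polyfun_sparse[OF assms(2)] by blast
  have "f s = (\<Sum>\<alpha>\<in>(\<lambda>(q, M). count M) ` set p.
      of_rat (sparse_coeff p \<alpha>) * (\<Prod>i\<in>{i. \<alpha> i \<noteq> 0}. s i ^ \<alpha> i))"
    unfolding p by (rule sparse_eval_eq_coeff_sum[symmetric]) auto
  also have "\<dots> = 0"
    using alg_indep_rat_sparse_coeff_eq_0[OF assms(1)] assms(3) by (simp add: p)
  finally show ?thesis .
qed

definition triangle_det :: "real \<times> real \<Rightarrow> real \<times> real \<Rightarrow> real \<times> real \<Rightarrow> real" where
  "triangle_det p1 p2 p3 =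
    (fst p2 - fst p1) * (snd p3 - snd p1) - (fst p3 - fst p1) * (snd p2 - snd p1)"

lemma collinear_imp_triangle_det_eq_0:
  assumes "collinear {p1, p2, p3}"
  shows "triangle_det p1 p2 p3 = 0"
proof -
  obtain u v where "\<forall>x\<in>{p1, p2, p3}. \<exists>c. x = u + c *\<^sub>R v"
    using assms collinear_alt by blast
  then obtain c1 c2 c3 where "p1 = u + c1 *\<^sub>R v" "p2 = u + c2 *\<^sub>R v" "p3 = u + c3 *\<^sub>R v"
    by auto
  then show ?thesis by (simp add: triangle_det_def algebra_simps)
qed

lemma collinear_Ppt_triangle: "collinear {Ppt t a b, Ppt t b c, Ppt t a c}"
proof -
  have "\<exists>x. p = Ppt t a b + x *\<^sub>R (1, t a + t b + t c)"
    if "p \<in> {Ppt t a b, Ppt t b c, Ppt t a c}" for p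
    using that
    by (auto intro: exI[of _ 0] exI[of _ "t c - t a"] exI[of _ "t c - t b"]
        simp: Ppt_def power2_eq_square algebra_simps)
  then show ?thesis unfolding collinear_alt by blast
qed

lemma not_collinear_Ppt_if_triangle_det:
  assumes "alg_indep_rat t" "triangle_det (Ppt s a b) (Ppt s c d) (Ppt s e f) \<noteq> 0"
  shows "\<not> collinear {Ppt t a b, Ppt t c d, Ppt t e f}"
proof
  have "rat_polyfun (\<lambda>s. triangle_det (Ppt s a b) (Ppt s c d) (Ppt s e f))"
    unfolding triangle_det_def Ppt_def fst_conv snd_conv
    by (intro rat_polyfun.intros rat_polyfun_diff rat_polyfun_power)
  moreover assume "collinear {Ppt t a b, Ppt t c d, Ppt t e f}"
  ultimately show False
    using alg_indep_rat_polyfun_eq_0[OF assms(1)] collinear_imp_triangle_det_eq_0 assms(2)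
    by blast
qed

theorem claim2p1:
  fixes t :: "nat \<Rightarrow> real" and i j k l m n :: nat
  assumes indep: "alg_indep_rat t"
    and dist: "distinct [i, j, k, l, m, n]"
  shows "collinear {Ppt t i j, Ppt t j k, Ppt t i k}
    \<and> \<not> collinear {Ppt t i j, Ppt t i k, Ppt t i l}
    \<and> \<not> collinear {Ppt t i j, Ppt t j k, Ppt t k l}
    \<and> \<not> collinear {Ppt t i j, Ppt t i k, Ppt t l m}
    \<and> \<not> collinear {Ppt t i j, Ppt t k l, Ppt t m n}"
proof -
  define s :: "nat \<Rightarrow> real" where
    "s x = (if x = j then 1 else if x = k then 2 else if x = l then 3
      else if x = m then 4 else if x = n then 5 else 0)" for x
  have "s i = 0" "s j = 1" "s k = 2" "s l = 3" "s m = 4" "s n = 5"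
    using dist by (auto simp: s_def)
  then have witness:
    "triangle_det (Ppt s i j) (Ppt s i k) (Ppt s i l) \<noteq> 0"
    "triangle_det (Ppt s i j) (Ppt s j k) (Ppt s k l) \<noteq> 0"
    "triangle_det (Ppt s i j) (Ppt s i k) (Ppt s l m) \<noteq> 0"
    "triangle_det (Ppt s i j) (Ppt s k l) (Ppt s m n) \<noteq> 0"
    by (simp_all add: triangle_det_def Ppt_def)
  show ?thesis
    using collinear_Ppt_triangle not_collinear_Ppt_if_triangle_det[OF indep witness(1)]
      not_collinear_Ppt_if_triangle_det[OF indep witness(2)]
      not_collinear_Ppt_if_triangle_det[OF indep witness(3)]
      not_collinear_Ppt_if_triangle_det[OF indep witness(4)]
    by blast
qed

end
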